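(* Let $S>0$, $\lambda>0$, $N>0$ and $\mathcal K\in\mathbb{N}^*$. For every $(N,\mathcal K)$-execution strategy $(n_1,\dots,n_{\mathcal K})$, $$S+\lambda SN\le S_{N,\mathcal K}(n_1,\dots,n_{\mathcal K})\le Se^{\lambda N}$$ and $$S+\tfrac12\lambda S\Big(N-\max_{1\le k\le\mathcal K}n_k\Big)\le\overline S_{N,\mathcal K}(n_1,\dots,n_{\mathcal K})\le S\,\frac{e^{\lambda N}-1}{\lambda N}.$$ Moreover, for fixed $N$ and $\mathcal K$, the maximum of $S_{N,\mathcal K}$ (equivalently of the market impact $I_{N,\mathcal K}=S_{N,\mathcal K}-S$) and the maximum of $\overline S_{N,\mathcal K}$ over all $(N,\mathcal K)$-execution strategies are attained if and only if the strategy is equally sized, $n_1=\dots=n_{\mathcal K}=N/\mathcal K$.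
   Context: Fix $S>0$ and $\lambda>0$. For $N>0$ and $\mathcal K\in\mathbb{N}^*$, an $(N,\mathcal K)$-execution strategy is a tuple $(n_1,\dots,n_{\mathcal K})\in(0,\infty)^{\mathcal K}$ with $\sum_{k=1}^{\mathcal K}n_k=N$. For $k\in\{0,\dots,\mathcal K\}$ its $k$-th price is $S_{N,k}(n_1,\dots,n_{\mathcal K}):=S\Big(1+\sum_{i=1}^{k}\lambda^i\sum_{1\le j_1<\dots<j_i\le k}n_{j_1}\cdots n_{j_i}\Big)=S\prod_{j=1}^k(1+\lambda n_j)$, and its average execution price is $\overline S_{N,\mathcal K}(n_1,\dots,n_{\mathcal K}):=\frac1N\sum_{k=1}^{\mathcal K}n_kS_{N,k-1}(n_1,\dots,n_{\mathcal K})$. *)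

theory Defs
  imports Complex_Main
begin

text \<open>An (N,K)-execution strategy: n_1,...,n_K > 0 with sum N (indices 1..K of n :: nat => real;
  values outside {1..K} are irrelevant).\<close>
definition exec_strategy :: "real \<Rightarrow> nat \<Rightarrow> (nat \<Rightarrow> real) \<Rightarrow> bool" where
  "exec_strategy N K n \<longleftrightarrow> (\<forall>k\<in>{1..K}. 0 < n k) \<and> (\<Sum>k=1..K. n k) = N"

text \<open>k-th price S_{N,k} = S (1 + sum_i lambda^i e_i(n_1..n_k)) = S prod_{j=1..k} (1 + lambda n_j).\<close>
definition kth_price :: "real \<Rightarrow> real \<Rightarrow> (nat \<Rightarrow> real) \<Rightarrow> nat \<Rightarrow> real" where
  "kth_price S lam n k = S * (\<Prod>j=1..k. (1 + lam * n j))"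

definition avg_price :: "real \<Rightarrow> real \<Rightarrow> real \<Rightarrow> nat \<Rightarrow> (nat \<Rightarrow> real) \<Rightarrow> real" where
  "avg_price S lam N K n = (1 / N) * (\<Sum>k=1..K. n k * kth_price S lam n (k - 1))"

end

theory Submission imports Defs "HOL-Analysis.Analysis" begin

text \<open>The K-th price is S times the product of the factors 1 + \<lambda> n_k, and the average price
  telescopes to (S_{N,K} - S) / (\<lambda> N). Expanding the product to second order gives both lower
  bounds, since the second elementary symmetric function of the n_k equals
  (N^2 - \<Sum> n_k^2) / 2 \<ge> N (N - max n_k) / 2; the bound 1 + x \<le> e^x gives both upper bounds.
  By AM-GM the product is at most (1 + \<lambda> N / K)^K, attained by the equal split; conversely,
  replacing two unequal sizes by their mean strictly increases the product, so any maximiser is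
  the equal split. Both prices are increasing functions of the product.\<close>

lemma prod_one_plus_ge_second_order:
  fixes x :: "nat \<Rightarrow> real"
  assumes "\<And>j. j \<in> {1..K} \<Longrightarrow> 0 \<le> x j"
  shows "1 + (\<Sum>k=1..K. x k) + (\<Sum>k=1..K. x k * (\<Sum>j=1..k-1. x j)) \<le> (\<Prod>k=1..K. 1 + x k)"
  using assms
proof (induction K)
  case 0
  then show ?case by simp
next
  case (Suc K)
  define s where "s = (\<Sum>k=1..K. x k)"
  define L where "L = 1 + s + (\<Sum>k=1..K. x k * (\<Sum>j=1..k-1. x j))"
  have x: "0 \<le> x (Suc K)" using Suc.prems by simp
  have "0 \<le> (\<Sum>k=1..K. x k * (\<Sum>j=1..k-1. x j))"
    using Suc.prems by (intro sum_nonneg mult_nonneg_nonneg) auto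
  then have "1 + s \<le> L" by (simp add: L_def)
  then have "L + x (Suc K) + x (Suc K) * s \<le> L * (1 + x (Suc K))"
    using mult_right_mono[OF \<open>1 + s \<le> L\<close> x] by (simp add: algebra_simps)
  also have "\<dots> \<le> (\<Prod>k=1..K. 1 + x k) * (1 + x (Suc K))"
    using Suc x by (intro mult_right_mono) (simp_all add: L_def s_def)
  finally show ?case by (simp add: L_def s_def)
qed

lemma sum_ordered_pairs:
  fixes n :: "nat \<Rightarrow> 'a::comm_ring_1"
  shows "2 * (\<Sum>k=1..K. n k * (\<Sum>j=1..k-1. n j)) = (\<Sum>k=1..K. n k)\<^sup>2 - (\<Sum>k=1..K. (n k)\<^sup>2)"
  by (induction K) (simp_all add: algebra_simps power2_eq_square)

lemma sum_prod_one_plus_telescope: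
  fixes n :: "nat \<Rightarrow> 'a::comm_ring_1"
  shows "lam * (\<Sum>k=1..K. n k * (\<Prod>j=1..k-1. 1 + lam * n j)) = (\<Prod>j=1..K. 1 + lam * n j) - 1"
  by (induction K) (simp_all add: algebra_simps)

lemma prod_le_mean_power:
  fixes x :: "'a \<Rightarrow> real"
  assumes "finite A" "A \<noteq> {}" "\<And>i. i \<in> A \<Longrightarrow> 0 \<le> x i"
  shows "(\<Prod>i\<in>A. x i) \<le> ((\<Sum>i\<in>A. x i) / card A) ^ card A"
proof (cases "(\<Prod>i\<in>A. x i) = 0")
  case True
  moreover have "0 \<le> ((\<Sum>i\<in>A. x i) / card A) ^ card A"
    using assms(3) by (intro zero_le_power divide_nonneg_nonneg sum_nonneg) auto
  ultimately show ?thesis by simp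
next
  case False
  have "card A > 0" using assms by (simp add: card_gt_0_iff)
  then have "(\<Prod>i\<in>A. x i) = ((\<Prod>i\<in>A. x i) powr (1 / card A)) ^ card A"
    using False prod_nonneg[of A x] assms(3) by (simp add: powr_power)
  also have "\<dots> \<le> ((\<Sum>i\<in>A. x i) / card A) ^ card A"
    using arith_geom_mean[OF assms] by (intro power_mono) (simp_all add: sum_divide_distrib)
  finally show ?thesis .
qed

lemma prod_one_plus_le_exp_sum:
  fixes x :: "'a \<Rightarrow> real"
  assumes "finite A" "\<And>i. i \<in> A \<Longrightarrow> 0 \<le> 1 + x i"
  shows "(\<Prod>i\<in>A. 1 + x i) \<le> exp (\<Sum>i\<in>A. x i)"
proof -
  have "(\<Prod>i\<in>A. 1 + x i) \<le> (\<Prod>i\<in>A. exp (x i))"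
    using assms by (intro prod_mono) (simp add: exp_ge_add_one_self)
  then show ?thesis using assms(1) by (simp add: exp_sum)
qed

lemma prod_one_plus_average_pair_gt:
  fixes x :: "'a \<Rightarrow> real" and lam :: real
  assumes "finite A" "a \<in> A" "b \<in> A" "a \<noteq> b" "x a \<noteq> x b" "lam \<noteq> 0"
    and "\<And>i. i \<in> A \<Longrightarrow> 0 < 1 + lam * x i"
  defines "y \<equiv> x(a := (x a + x b) / 2, b := (x a + x b) / 2)"
  shows "(\<Prod>i\<in>A. 1 + lam * x i) < (\<Prod>i\<in>A. 1 + lam * y i)"
proof -
  define R where "R = (\<Prod>i\<in>A - {a} - {b}. 1 + lam * x i)"
  have split: "(\<Prod>i\<in>A. f i) = f a * (f b * (\<Prod>i\<in>A - {a} - {b}. f i))" for f :: "'a \<Rightarrow> real"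
    using assms(1-4) by (simp add: prod.remove)
  have "R > 0" unfolding R_def using assms(7) by (intro prod_pos) auto
  have y_rest: "(\<Prod>i\<in>A - {a} - {b}. 1 + lam * y i) = R"
    unfolding R_def y_def by (intro prod.cong) auto
  have "(1 + lam * y a) * (1 + lam * y b) = (1 + lam * x a) * (1 + lam * x b) + (lam * (x a - x b) / 2)\<^sup>2"
    using assms(4) by (simp add: y_def power2_eq_square field_simps)
  moreover have "(lam * (x a - x b) / 2)\<^sup>2 > 0" using assms(5,6) by simp
  ultimately show ?thesis
    using \<open>R > 0\<close> split[of "\<lambda>i. 1 + lam * x i"] split[of "\<lambda>i. 1 + lam * y i"]
    by (simp add: y_rest R_def[symmetric] mult.assoc[symmetric])
qed

lemma exec_strategy_average_pair:
  assumes "exec_strategy N K n" "a \<in> {1..K}" "b \<in> {1..K}" "a \<noteq> b"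
  shows "exec_strategy N K (n(a := (n a + n b) / 2, b := (n a + n b) / 2))"
proof -
  have split: "(\<Sum>i=1..K. f i) = f a + (f b + (\<Sum>i\<in>{1..K} - {a} - {b}. f i))" for f :: "nat \<Rightarrow> real"
    using assms(2-4) by (simp add: sum.remove)
  show ?thesis
    using assms split[of n] split[of "n(a := (n a + n b) / 2, b := (n a + n b) / 2)"]
    unfolding exec_strategy_def by (auto intro!: sum.cong add_pos_pos)
qed

lemma exec_strategy_Max_le:
  assumes "exec_strategy N K n" "K \<ge> 1"
  shows "Max (n ` {1..K}) \<le> N"
proof -
  have "Max (n ` {1..K}) \<in> n ` {1..K}" using assms(2) by (intro Max_in) auto
  then obtain i where i: "i \<in> {1..K}" "Max (n ` {1..K}) = n i" by auto
  have "n i \<le> (\<Sum>k=1..K. n k)"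
    using assms(1) i(1) unfolding exec_strategy_def by (intro member_le_sum) (auto intro: less_imp_le)
  then show ?thesis using assms(1) i(2) unfolding exec_strategy_def by simp
qed

lemma avg_price_eq_impact:
  assumes "lam \<noteq> 0"
  shows "avg_price S lam N K n = (kth_price S lam n K - S) / (lam * N)"
proof -
  have "(\<Sum>k=1..K. n k * kth_price S lam n (k - 1)) = S * (\<Sum>k=1..K. n k * (\<Prod>j=1..k-1. 1 + lam * n j))"
    unfolding kth_price_def by (simp add: sum_distrib_left mult_ac)
  then have "kth_price S lam n K - S = lam * (\<Sum>k=1..K. n k * kth_price S lam n (k - 1))"
    using sum_prod_one_plus_telescope[of lam n K] unfolding kth_price_def
    by (simp add: mult.left_commute[of lam] right_diff_distrib)
  then show ?thesis
    using assms unfolding avg_price_def by simp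
qed

lemma kth_price_ge_quadratic:
  assumes "S \<ge> 0" "lam \<ge> 0" "K \<ge> 1" "exec_strategy N K n"
  shows "S * (1 + lam * N + lam\<^sup>2 * N * (N - Max (n ` {1..K})) / 2) \<le> kth_price S lam n K"
proof -
  define M where "M = Max (n ` {1..K})"
  define e2 where "e2 = (\<Sum>k=1..K. n k * (\<Sum>j=1..k-1. n j))"
  have pos: "\<And>k. k \<in> {1..K} \<Longrightarrow> 0 < n k" and total: "(\<Sum>k=1..K. n k) = N"
    using assms(4) unfolding exec_strategy_def by auto
  have "(\<Sum>k=1..K. (n k)\<^sup>2) \<le> (\<Sum>k=1..K. M * n k)"
    using pos unfolding M_def power2_eq_square
    by (intro sum_mono mult_right_mono) (auto intro: less_imp_le)
  then have "N * (N - M) \<le> 2 * e2"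
    using sum_ordered_pairs[of n K] total unfolding e2_def
    by (simp add: sum_distrib_left[symmetric] power2_eq_square algebra_simps)
  then have "lam\<^sup>2 * N * (N - M) / 2 \<le> lam\<^sup>2 * e2"
    using mult_left_mono[of "N * (N - M)" "2 * e2" "lam\<^sup>2"] by simp
  moreover have "1 + (\<Sum>k=1..K. lam * n k) + (\<Sum>k=1..K. lam * n k * (\<Sum>j=1..k-1. lam * n j))
      \<le> (\<Prod>k=1..K. 1 + lam * n k)"
    using pos assms(2) by (intro prod_one_plus_ge_second_order) (simp add: less_imp_le)
  then have "1 + lam * N + lam\<^sup>2 * e2 \<le> (\<Prod>k=1..K. 1 + lam * n k)"
    unfolding e2_def total[symmetric]
    by (simp add: sum_distrib_left power2_eq_square mult_ac)
  ultimately have "1 + lam * N + lam\<^sup>2 * N * (N - M) / 2 \<le> (\<Prod>k=1..K. 1 + lam * n k)"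
    by linarith
  then show ?thesis
    using assms(1) unfolding M_def kth_price_def by (rule mult_left_mono)
qed

lemma kth_price_le_exp:
  assumes "S \<ge> 0" "lam \<ge> 0" "exec_strategy N K n"
  shows "kth_price S lam n K \<le> S * exp (lam * N)"
proof -
  have "(\<Prod>k=1..K. 1 + lam * n k) \<le> exp (\<Sum>k=1..K. lam * n k)"
    using assms(2,3) unfolding exec_strategy_def
    by (intro prod_one_plus_le_exp_sum) (auto intro!: add_nonneg_nonneg mult_nonneg_nonneg simp: less_imp_le)
  then show ?thesis
    using assms unfolding kth_price_def exec_strategy_def
    by (simp add: sum_distrib_left[symmetric] mult_left_mono)
qed

lemma kth_price_le_equal_sizes:
  assumes "S \<ge> 0" "lam \<ge> 0" "K \<ge> 1" "exec_strategy N K m"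
  shows "kth_price S lam m K \<le> S * (1 + lam * N / K) ^ K"
proof -
  have pos: "\<And>k. k \<in> {1..K} \<Longrightarrow> 0 < m k" and total: "(\<Sum>k=1..K. m k) = N"
    using assms(4) unfolding exec_strategy_def by auto
  have "(\<Prod>k=1..K. 1 + lam * m k) \<le> ((\<Sum>k=1..K. 1 + lam * m k) / card {1..K}) ^ card {1..K}"
    using assms(2,3) pos by (intro prod_le_mean_power) (auto simp: less_imp_le)
  also have "(\<Sum>k=1..K. 1 + lam * m k) / card {1..K} = 1 + lam * N / K"
    using assms(3) total by (simp add: sum.distrib sum_distrib_left[symmetric] field_simps)
  finally show ?thesis
    using assms(1) unfolding kth_price_def by (simp add: mult_left_mono)
qed

lemma kth_price_equal_sizes:
  assumes "\<forall>k\<in>{1..K}. n k = N / K"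
  shows "kth_price S lam n K = S * (1 + lam * N / K) ^ K"
  using assms unfolding kth_price_def by simp

lemma kth_price_lt_average_pair:
  assumes "S > 0" "lam > 0" "exec_strategy N K n" "a \<in> {1..K}" "b \<in> {1..K}" "n a \<noteq> n b"
  shows "kth_price S lam n K < kth_price S lam (n(a := (n a + n b) / 2, b := (n a + n b) / 2)) K"
proof -
  have "(\<Prod>k=1..K. 1 + lam * n k) < (\<Prod>k=1..K. 1 + lam * (n(a := (n a + n b) / 2, b := (n a + n b) / 2)) k)"
    using assms unfolding exec_strategy_def
    by (intro prod_one_plus_average_pair_gt) (auto intro: add_pos_pos)
  then show ?thesis using assms(1) unfolding kth_price_def by simp
qed

lemma kth_price_max_iff_equal_sizes:
  assumes "S > 0" "lam > 0" "K \<ge> 1" "exec_strategy N K n"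
  shows "(\<forall>m. exec_strategy N K m \<longrightarrow> kth_price S lam m K \<le> kth_price S lam n K)
    \<longleftrightarrow> (\<forall>k\<in>{1..K}. n k = N / K)"
proof
  assume max: "\<forall>m. exec_strategy N K m \<longrightarrow> kth_price S lam m K \<le> kth_price S lam n K"
  have const: "n k = n 1" if "k \<in> {1..K}" for k
  proof (rule ccontr)
    assume "n k \<noteq> n 1"
    then have "kth_price S lam n K < kth_price S lam (n(k := (n k + n 1) / 2, 1 := (n k + n 1) / 2)) K"
      using assms that by (intro kth_price_lt_average_pair) auto
    moreover have "exec_strategy N K (n(k := (n k + n 1) / 2, 1 := (n k + n 1) / 2))"
      using assms \<open>n k \<noteq> n 1\<close> that by (intro exec_strategy_average_pair) auto
    ultimately show False using max by (meson not_le)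
  qed
  have "(\<Sum>k=1..K. n k) = (\<Sum>k=1..K. n 1)"
    by (rule sum.cong[OF refl const])
  then have "N = K * n 1"
    using assms(4) unfolding exec_strategy_def by simp
  then have "n 1 = N / K"
    using assms(3) by simp
  then show "\<forall>k\<in>{1..K}. n k = N / K"
    using const by simp
next
  assume "\<forall>k\<in>{1..K}. n k = N / K"
  then show "\<forall>m. exec_strategy N K m \<longrightarrow> kth_price S lam m K \<le> kth_price S lam n K"
    using assms kth_price_le_equal_sizes[of S lam K N] kth_price_equal_sizes[of K n N S lam] by simp
qed

theorem theorem5p1:
  fixes S lam N :: real and K :: nat and n :: "nat \<Rightarrow> real"
  assumes "S > 0" and "lam > 0" and "N > 0" and "K \<ge> 1"
    and "exec_strategy N K n"
  shows "S + lam * S * N \<le> kth_price S lam n K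
      \<and> kth_price S lam n K \<le> S * exp (lam * N)
      \<and> S + (1/2) * lam * S * (N - Max (n ` {1..K})) \<le> avg_price S lam N K n
      \<and> avg_price S lam N K n \<le> S * (exp (lam * N) - 1) / (lam * N)
      \<and> ((\<forall>m. exec_strategy N K m \<longrightarrow> kth_price S lam m K \<le> kth_price S lam n K)
           \<longleftrightarrow> (\<forall>k\<in>{1..K}. n k = N / real K))
      \<and> ((\<forall>m. exec_strategy N K m \<longrightarrow> kth_price S lam m K - S \<le> kth_price S lam n K - S)
           \<longleftrightarrow> (\<forall>k\<in>{1..K}. n k = N / real K))
      \<and> ((\<forall>m. exec_strategy N K m \<longrightarrow> avg_price S lam N K m \<le> avg_price S lam N K n)
           \<longleftrightarrow> (\<forall>k\<in>{1..K}. n k = N / real K))"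
proof -
  define M where "M = Max (n ` {1..K})"
  have "lam * N > 0" using assms by simp
  have avg: "\<And>m. avg_price S lam N K m = (kth_price S lam m K - S) / (lam * N)"
    using assms(2) by (simp add: avg_price_eq_impact)
  have quad: "S * (1 + lam * N + lam\<^sup>2 * N * (N - M) / 2) \<le> kth_price S lam n K"
    unfolding M_def using assms by (intro kth_price_ge_quadratic) auto
  have "0 \<le> S * lam\<^sup>2 * N * (N - M)"
    unfolding M_def using assms exec_strategy_Max_le by simp
  moreover have "S * (1 + lam * N + lam\<^sup>2 * N * (N - M) / 2) = S + lam * S * N + S * lam\<^sup>2 * N * (N - M) / 2"
    by (simp add: algebra_simps)
  ultimately have lower: "S + lam * S * N \<le> kth_price S lam n K"
    using quad by linarith
  have upper: "kth_price S lam n K \<le> S * exp (lam * N)"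
    using assms by (intro kth_price_le_exp) auto
  have "S + (1/2) * lam * S * (N - M) = S * (lam * N + lam\<^sup>2 * N * (N - M) / 2) / (lam * N)"
    using assms by (simp add: field_simps power2_eq_square)
  with quad have avg_lower: "S + (1/2) * lam * S * (N - M) \<le> avg_price S lam N K n"
    unfolding avg using \<open>lam * N > 0\<close> by (simp add: divide_right_mono algebra_simps)
  have avg_upper: "avg_price S lam N K n \<le> S * (exp (lam * N) - 1) / (lam * N)"
    unfolding avg using upper \<open>lam * N > 0\<close> by (simp add: divide_right_mono right_diff_distrib)
  have "\<And>m. avg_price S lam N K m \<le> avg_price S lam N K n \<longleftrightarrow> kth_price S lam m K \<le> kth_price S lam n K"
    unfolding avg using \<open>lam * N > 0\<close> by (simp add: divide_le_cancel)
  then show ?thesis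
    using lower upper avg_lower avg_upper kth_price_max_iff_equal_sizes[OF assms(1,2,4,5)]
    unfolding M_def by simp
qed

end
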